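(* Let $M$ be a commutative monoid. Every nonempty irreducible closed subset $Y$ of the terminal space $\mathcal S(M)$ has a unique generic point, i.e. there is a unique $I\in Y$ with $Y=\overline{\{I\}}$.
   Context: A monoid is a commutative monoid $(M,\cdot,1)$. An ideal of $M$ is a subset $I\subseteq M$ such that $im\in I$ for all $i\in I$, $m\in M$; it is proper if $I\neq M$. A proper ideal $K$ of $M$ is strongly irreducible if for all ideals $I,J$ of $M$, $I\cap J\subseteq K$ implies $I\subseteq K$ or $J\subseteq K$. $\mathcal S(M)$ is the set of all strongly irreducible ideals of $M$. For $X\subseteq\mathcal S(M)$, $\mathcal K(X)=\bigcap_{I\in X}I$, and $\mathcal{HK}(X)=\{J\in\mathcal S(M)\mid J\supseteq\mathcal K(X)\}$ if $X\neq\emptyset$, $\mathcal{HK}(\emptyset)=\emptyset$. The terminal space of $M$ is the set $\mathcal S(M)$ with the topology whose closed sets are exactly the sets $\mathcal{HK}(X)$, $X\subseteq\mathcal S(M)$. A subset $Y$ of a topological space is irreducible if whenever $Y\subseteq Y_1\cup Y_2$ with $Y_1,Y_2$ closed, then $Y\subseteq Y_1$ or $Y\subseteq Y_2$. *)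

theory Defs
  imports Main
begin

definition mideal :: "'a::comm_monoid_mult set \<Rightarrow> bool" where
  "mideal I \<longleftrightarrow> (\<forall>i\<in>I. \<forall>m. i * m \<in> I)"

definition strongly_irreducible :: "'a::comm_monoid_mult set \<Rightarrow> bool" where
  "strongly_irreducible K \<longleftrightarrow> mideal K \<and> K \<noteq> UNIV \<and>
     (\<forall>I J. mideal I \<longrightarrow> mideal J \<longrightarrow> I \<inter> J \<subseteq> K \<longrightarrow> I \<subseteq> K \<or> J \<subseteq> K)"

definition SI :: "'a::comm_monoid_mult set set" where
  "SI = {K. strongly_irreducible K}"

definition KK :: "'a::comm_monoid_mult set set \<Rightarrow> 'a set" where
  "KK X = \<Inter>X"

definition HK :: "'a::comm_monoid_mult set set \<Rightarrow> 'a set set" where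
  "HK X = (if X = {} then {} else {J \<in> SI. KK X \<subseteq> J})"

definition terminal_closed :: "'a::comm_monoid_mult set set \<Rightarrow> bool" where
  "terminal_closed Y \<longleftrightarrow> (\<exists>X. X \<subseteq> SI \<and> Y = HK X)"

definition terminal_closure :: "'a::comm_monoid_mult set set \<Rightarrow> 'a set set" where
  "terminal_closure A = \<Inter>{C. terminal_closed C \<and> A \<subseteq> C}"

definition terminal_irreducible :: "'a::comm_monoid_mult set set \<Rightarrow> bool" where
  "terminal_irreducible Y \<longleftrightarrow> (\<forall>Y1 Y2. terminal_closed Y1 \<longrightarrow> terminal_closed Y2 \<longrightarrow>
      Y \<subseteq> Y1 \<union> Y2 \<longrightarrow> Y \<subseteq> Y1 \<or> Y \<subseteq> Y2)"

end

theory Submission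
  imports Defs
begin

text \<open>
  A nonempty closed set Y is exactly the set of strongly irreducible ideals containing
  its kernel \<Inter>Y, so it suffices to show that the kernel is itself strongly irreducible:
  then Y is the closure of the point \<Inter>Y. If A \<inter> B \<subseteq> \<Inter>Y for ideals A and B, every member
  of Y contains A or B, so Y is covered by the closed sets of strongly irreducible ideals
  above A and above B; irreducibility puts Y into one of them. Uniqueness holds because
  the closure of a point I consists of the strongly irreducible ideals containing I, so
  I is recovered as its least element.
\<close>

lemma terminal_closed_subset_SI: "terminal_closed C \<Longrightarrow> C \<subseteq> SI"
  unfolding terminal_closed_def HK_def by (auto split: if_splits)

lemma terminal_closed_eq_upper_Inter:
  assumes "terminal_closed C" "C \<noteq> {}"
  shows "C = {J \<in> SI. \<Inter>C \<subseteq> J}"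
proof -
  obtain X where X: "X \<subseteq> SI" "C = HK X"
    using assms(1) unfolding terminal_closed_def by blast
  with assms(2) have C: "C = {J \<in> SI. \<Inter>X \<subseteq> J}"
    unfolding HK_def KK_def by (auto split: if_splits)
  with X(1) have "\<Inter>C = \<Inter>X" by auto
  with C show ?thesis by simp
qed

lemma terminal_closed_upper: "terminal_closed {J \<in> SI. A \<subseteq> J}"
proof (cases "{J \<in> SI. A \<subseteq> J} = {}")
  case True
  then have "{J \<in> SI. A \<subseteq> J} = HK {}" by (simp add: HK_def)
  then show ?thesis unfolding terminal_closed_def by blast
next
  case False
  let ?U = "{J \<in> SI. A \<subseteq> J}"
  have "A \<subseteq> \<Inter>?U" by blast
  with False have "HK ?U = ?U" unfolding HK_def KK_def by auto
  then show ?thesis unfolding terminal_closed_def by blast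
qed

lemma terminal_closure_singleton:
  assumes "I \<in> SI"
  shows "terminal_closure {I} = {J \<in> SI. I \<subseteq> J}"
proof
  show "terminal_closure {I} \<subseteq> {J \<in> SI. I \<subseteq> J}"
    unfolding terminal_closure_def using terminal_closed_upper[of I] assms by blast
  show "{J \<in> SI. I \<subseteq> J} \<subseteq> terminal_closure {I}"
    unfolding terminal_closure_def
  proof (rule Inter_greatest)
    fix C assume "C \<in> {C. terminal_closed C \<and> {I} \<subseteq> C}"
    then have C: "terminal_closed C" "I \<in> C" by auto
    then have "C = {J \<in> SI. \<Inter>C \<subseteq> J}" using terminal_closed_eq_upper_Inter by blast
    moreover have "\<Inter>C \<subseteq> I" using C(2) by blast
    ultimately show "{J \<in> SI. I \<subseteq> J} \<subseteq> C" by blast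
  qed
qed

lemma terminal_closure_singleton_inj:
  assumes "I \<in> SI" "I' \<in> SI" "terminal_closure {I} = terminal_closure {I'}"
  shows "I = I'"
  using assms terminal_closure_singleton[of I] terminal_closure_singleton[of I'] by blast

lemma mideal_Inter: "(\<And>I. I \<in> X \<Longrightarrow> mideal I) \<Longrightarrow> mideal (\<Inter>X)"
  unfolding mideal_def by blast

lemma strongly_irreducible_Inter:
  fixes Y :: "'a::comm_monoid_mult set set"
  assumes "Y \<subseteq> SI" "Y \<noteq> {}" "terminal_irreducible Y"
  shows "strongly_irreducible (\<Inter>Y)"
proof -
  have si: "strongly_irreducible J" if "J \<in> Y" for J
    using assms(1) that unfolding SI_def by auto
  have "mideal (\<Inter>Y)"
    using si by (auto intro: mideal_Inter simp: strongly_irreducible_def)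
  moreover have "\<Inter>Y \<noteq> UNIV"
    using si assms(2) unfolding strongly_irreducible_def by blast
  moreover have "A \<subseteq> \<Inter>Y \<or> B \<subseteq> \<Inter>Y"
    if "mideal A" "mideal B" "A \<inter> B \<subseteq> \<Inter>Y" for A B :: "'a set"
  proof -
    have "Y \<subseteq> {J \<in> SI. A \<subseteq> J} \<union> {J \<in> SI. B \<subseteq> J}"
      using si that assms(1) unfolding strongly_irreducible_def by blast
    then have "Y \<subseteq> {J \<in> SI. A \<subseteq> J} \<or> Y \<subseteq> {J \<in> SI. B \<subseteq> J}"
      using assms(3) terminal_closed_upper unfolding terminal_irreducible_def by blast
    then show ?thesis by blast
  qed
  ultimately show ?thesis unfolding strongly_irreducible_def by blast
qed

theorem corollary2p7:
  fixes Y :: "'a::comm_monoid_mult set set"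
  assumes "terminal_closed Y" and "Y \<noteq> {}" and "terminal_irreducible Y"
  shows "\<exists>!I. I \<in> Y \<and> Y = terminal_closure {I}"
proof -
  have Y_SI: "Y \<subseteq> SI" using assms(1) by (rule terminal_closed_subset_SI)
  have Y_eq: "Y = {J \<in> SI. \<Inter>Y \<subseteq> J}"
    using assms(1,2) by (rule terminal_closed_eq_upper_Inter)
  have kernel_SI: "\<Inter>Y \<in> SI"
    using strongly_irreducible_Inter[OF Y_SI assms(2,3)] unfolding SI_def by simp
  have generic: "\<Inter>Y \<in> Y \<and> Y = terminal_closure {\<Inter>Y}"
    using kernel_SI Y_eq terminal_closure_singleton[OF kernel_SI] by blast
  show ?thesis
  proof (rule ex1I[of _ "\<Inter>Y"])
    show "\<Inter>Y \<in> Y \<and> Y = terminal_closure {\<Inter>Y}" by (fact generic)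
  next
    fix I assume "I \<in> Y \<and> Y = terminal_closure {I}"
    with generic Y_SI kernel_SI show "I = \<Inter>Y"
      using terminal_closure_singleton_inj[of I "\<Inter>Y"] by blast
  qed
qed

end
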